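(* For every set of names $\rho$ and processes $P,Q$: if $\rho\vdash P$ and $P\equiv Q$ then $\rho\vdash Q$.
   Context: Let $\mathcal N$ be a countable set of names. Processes are generated by $P,Q ::= 0 \mid P\mid Q \mid (\nu a)P \mid (a)P \mid \alpha.P$, where $(\nu a)P$ is name restriction (binding $a$), $(a)P$ is the authorization scope ($a$ not bound), and prefixes are $\alpha ::= \overline{a}\langle b\rangle$ (output) $\mid a(x)$ (input, binding $x$) $\mid \overline{a}\langle\!\langle b\rangle\!\rangle$ (send authorization for $b$ on $a$) $\mid a\langle\!\langle b\rangle\!\rangle$ (receive authorization for $b$ on $a$; $b$ not bound). Free names: $\mathrm{fn}(0)=\emptyset$, $\mathrm{fn}(P\mid Q)=\mathrm{fn}(P)\cup\mathrm{fn}(Q)$, $\mathrm{fn}((\nu a)P)=\mathrm{fn}(P)\setminus\{a\}$, $\mathrm{fn}((a)P)=\{a\}\cup\mathrm{fn}(P)$, $\mathrm{fn}(\overline{a}\langle b\rangle.P)=\mathrm{fn}(\overline{a}\langle\!\langle b\rangle\!\rangle.P)=\mathrm{fn}(a\langle\!\langle b\rangle\!\rangle.P)=\{a,b\}\cup\mathrm{fn}(P)$, $\mathrm{fn}(a(x).P)=\{a\}\cup(\mathrm{fn}(P)\setminus\{x\})$. Structural congruence $\equiv$ is the least congruence on processes satisfying: $P\mid 0\equiv P$; $P\mid Q\equiv Q\mid P$; $(P\mid Q)\mid R\equiv P\mid(Q\mid R)$; $(\nu a)0\equiv 0$; $(\nu a)(\nu b)P\equiv(\nu b)(\nu a)P$;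 $P\mid(\nu a)Q\equiv(\nu a)(P\mid Q)$ if $a\notin\mathrm{fn}(P)$; $P\equiv Q$ whenever $P,Q$ are $\alpha$-convertible; $(a)(b)P\equiv(b)(a)P$; $(a)0\equiv 0$; $(a)(P\mid Q)\equiv(a)P\mid(a)Q$; $(a)(\nu b)P\equiv(\nu b)(a)P$ if $a\neq b$. The typing judgment $\rho\vdash P$ ($\rho$ a set of names) is the least relation closed under the rules: $\emptyset\vdash 0$; if $\rho_1\vdash P$ and $\rho_2\vdash Q$ then $\rho_1\cup\rho_2\vdash P\mid Q$; if $\rho\vdash P$ and $a\notin\rho$ then $\rho\vdash(\nu a)P$; if $\rho\vdash P$ then $\rho\setminus\{a\}\vdash(a)P$; if $\rho\vdash P$ then $\rho\cup\{a\}\vdash\overline{a}\langle b\rangle.P$; if $\rho\vdash P$ and $x\notin\rho$ then $\rho\cup\{a\}\vdash a(x).P$; if $\rho\vdash P$ and $b\notin\rho$ then $\rho\cup\{a,b\}\vdash\overline{a}\langle\!\langle b\rangle\!\rangle.P$; if $\rho\vdash P$ then $(\rho\setminus\{b\})\cup\{a\}\vdash a\langle\!\langle b\rangle\!\rangle.P$. *)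

theory Defs
  imports Main
begin

text \<open>Names: the countable set N is represented by nat (countably infinite).\<close>
type_synonym name = nat

datatype proc =
    Nil
  | Par proc proc
  | Res name proc          (* (nu a)P, binds a *)
  | Auth name proc         (* (a)P, a not bound *)
  | Out name name proc
  | Inp name name proc     (* a(x).P, binds x *)
  | AOut name name proc
  | AInp name name proc    (* a<<b>>.P receive authorization, b not bound *)

fun fn :: "proc \<Rightarrow> name set" where
  "fn Nil = {}"
| "fn (Par P Q) = fn P \<union> fn Q"
| "fn (Res a P) = fn P - {a}"
| "fn (Auth a P) = {a} \<union> fn P"
| "fn (Out a b P) = {a, b} \<union> fn P"
| "fn (Inp a x P) = {a} \<union> (fn P - {x})"
| "fn (AOut a b P) = {a, b} \<union> fn P"
| "fn (AInp a b P) = {a, b} \<union> fn P"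

definition swp :: "name \<Rightarrow> name \<Rightarrow> name \<Rightarrow> name" where
  "swp a b c = (if c = a then b else if c = b then a else c)"

fun swap :: "name \<Rightarrow> name \<Rightarrow> proc \<Rightarrow> proc" where
  "swap a b Nil = Nil"
| "swap a b (Par P Q) = Par (swap a b P) (swap a b Q)"
| "swap a b (Res c P) = Res (swp a b c) (swap a b P)"
| "swap a b (Auth c P) = Auth (swp a b c) (swap a b P)"
| "swap a b (Out c d P) = Out (swp a b c) (swp a b d) (swap a b P)"
| "swap a b (Inp c x P) = Inp (swp a b c) (swp a b x) (swap a b P)"
| "swap a b (AOut c d P) = AOut (swp a b c) (swp a b d) (swap a b P)"
| "swap a b (AInp c d P) = AInp (swp a b c) (swp a b d) (swap a b P)"

inductive alpha :: "proc \<Rightarrow> proc \<Rightarrow> bool" where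
  alpha_res: "b \<notin> fn P \<Longrightarrow> alpha (Res a P) (Res b (swap a b P))"
| alpha_inp: "y \<notin> fn P \<Longrightarrow> alpha (Inp a x P) (Inp a y (swap x y P))"
| alpha_refl: "alpha P P"
| alpha_sym: "alpha P Q \<Longrightarrow> alpha Q P"
| alpha_trans: "alpha P Q \<Longrightarrow> alpha Q R \<Longrightarrow> alpha P R"
| alpha_par: "alpha P P' \<Longrightarrow> alpha Q Q' \<Longrightarrow> alpha (Par P Q) (Par P' Q')"
| alpha_resc: "alpha P P' \<Longrightarrow> alpha (Res a P) (Res a P')"
| alpha_auth: "alpha P P' \<Longrightarrow> alpha (Auth a P) (Auth a P')"
| alpha_out: "alpha P P' \<Longrightarrow> alpha (Out a b P) (Out a b P')"
| alpha_inpc: "alpha P P' \<Longrightarrow> alpha (Inp a x P) (Inp a x P')"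
| alpha_aout: "alpha P P' \<Longrightarrow> alpha (AOut a b P) (AOut a b P')"
| alpha_ainp: "alpha P P' \<Longrightarrow> alpha (AInp a b P) (AInp a b P')"

inductive scong :: "proc \<Rightarrow> proc \<Rightarrow> bool" (infix "\<equiv>\<^sub>s" 50) where
  sc_par_nil: "Par P Nil \<equiv>\<^sub>s P"
| sc_par_comm: "Par P Q \<equiv>\<^sub>s Par Q P"
| sc_par_assoc: "Par (Par P Q) R \<equiv>\<^sub>s Par P (Par Q R)"
| sc_res_nil: "Res a Nil \<equiv>\<^sub>s Nil"
| sc_res_res: "Res a (Res b P) \<equiv>\<^sub>s Res b (Res a P)"
| sc_scope: "a \<notin> fn P \<Longrightarrow> Par P (Res a Q) \<equiv>\<^sub>s Res a (Par P Q)"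
| sc_alpha: "alpha P Q \<Longrightarrow> P \<equiv>\<^sub>s Q"
| sc_auth_auth: "Auth a (Auth b P) \<equiv>\<^sub>s Auth b (Auth a P)"
| sc_auth_nil: "Auth a Nil \<equiv>\<^sub>s Nil"
| sc_auth_par: "Auth a (Par P Q) \<equiv>\<^sub>s Par (Auth a P) (Auth a Q)"
| sc_auth_res: "a \<noteq> b \<Longrightarrow> Auth a (Res b P) \<equiv>\<^sub>s Res b (Auth a P)"
| sc_refl: "P \<equiv>\<^sub>s P"
| sc_sym: "P \<equiv>\<^sub>s Q \<Longrightarrow> Q \<equiv>\<^sub>s P"
| sc_trans: "P \<equiv>\<^sub>s Q \<Longrightarrow> Q \<equiv>\<^sub>s R \<Longrightarrow> P \<equiv>\<^sub>s R"
| sc_par: "P \<equiv>\<^sub>s P' \<Longrightarrow> Q \<equiv>\<^sub>s Q' \<Longrightarrow> Par P Q \<equiv>\<^sub>s Par P' Q'"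
| sc_resc: "P \<equiv>\<^sub>s P' \<Longrightarrow> Res a P \<equiv>\<^sub>s Res a P'"
| sc_authc: "P \<equiv>\<^sub>s P' \<Longrightarrow> Auth a P \<equiv>\<^sub>s Auth a P'"
| sc_out: "P \<equiv>\<^sub>s P' \<Longrightarrow> Out a b P \<equiv>\<^sub>s Out a b P'"
| sc_inp: "P \<equiv>\<^sub>s P' \<Longrightarrow> Inp a x P \<equiv>\<^sub>s Inp a x P'"
| sc_aout: "P \<equiv>\<^sub>s P' \<Longrightarrow> AOut a b P \<equiv>\<^sub>s AOut a b P'"
| sc_ainp: "P \<equiv>\<^sub>s P' \<Longrightarrow> AInp a b P \<equiv>\<^sub>s AInp a b P'"

inductive typed :: "name set \<Rightarrow> proc \<Rightarrow> bool" (infix "\<turnstile>\<^sub>t" 40) where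
  t_nil: "{} \<turnstile>\<^sub>t Nil"
| t_par: "\<rho>1 \<turnstile>\<^sub>t P \<Longrightarrow> \<rho>2 \<turnstile>\<^sub>t Q \<Longrightarrow> (\<rho>1 \<union> \<rho>2) \<turnstile>\<^sub>t Par P Q"
| t_res: "\<rho> \<turnstile>\<^sub>t P \<Longrightarrow> a \<notin> \<rho> \<Longrightarrow> \<rho> \<turnstile>\<^sub>t Res a P"
| t_auth: "\<rho> \<turnstile>\<^sub>t P \<Longrightarrow> (\<rho> - {a}) \<turnstile>\<^sub>t Auth a P"
| t_out: "\<rho> \<turnstile>\<^sub>t P \<Longrightarrow> (\<rho> \<union> {a}) \<turnstile>\<^sub>t Out a b P"
| t_inp: "\<rho> \<turnstile>\<^sub>t P \<Longrightarrow> x \<notin> \<rho> \<Longrightarrow> (\<rho> \<union> {a}) \<turnstile>\<^sub>t Inp a x P"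
| t_aout: "\<rho> \<turnstile>\<^sub>t P \<Longrightarrow> b \<notin> \<rho> \<Longrightarrow> (\<rho> \<union> {a, b}) \<turnstile>\<^sub>t AOut a b P"
| t_ainp: "\<rho> \<turnstile>\<^sub>t P \<Longrightarrow> ((\<rho> - {b}) \<union> {a}) \<turnstile>\<^sub>t AInp a b P"

end

theory Submission
  imports Defs
begin

text \<open>The only binder-sensitive axioms are scope extrusion and
  alpha-conversion; both rest on the fact that a type consists of free names only, so a
  name fresh for \<open>P\<close> lies outside every type of \<open>P\<close>, and renaming a bound name to such a
  fresh name leaves the type unchanged.\<close>

lemma typed_fn: "\<rho> \<turnstile>\<^sub>t P \<Longrightarrow> \<rho> \<subseteq> fn P"
  by (induction rule: typed.induct) auto

lemma typed_Nil_iff: "\<rho> \<turnstile>\<^sub>t Nil \<longleftrightarrow> \<rho> = {}"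
  by (blast elim: typed.cases intro: typed.intros)

lemma typed_Par_iff: "\<rho> \<turnstile>\<^sub>t Par P Q \<longleftrightarrow> (\<exists>\<rho>1 \<rho>2. \<rho> = \<rho>1 \<union> \<rho>2 \<and> \<rho>1 \<turnstile>\<^sub>t P \<and> \<rho>2 \<turnstile>\<^sub>t Q)"
  by (blast elim: typed.cases intro: typed.intros)

lemma typed_Res_iff: "\<rho> \<turnstile>\<^sub>t Res a P \<longleftrightarrow> \<rho> \<turnstile>\<^sub>t P \<and> a \<notin> \<rho>"
  by (blast elim: typed.cases intro: typed.intros)

lemma typed_Auth_iff: "\<rho> \<turnstile>\<^sub>t Auth a P \<longleftrightarrow> (\<exists>\<sigma>. \<rho> = \<sigma> - {a} \<and> \<sigma> \<turnstile>\<^sub>t P)"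
  by (blast elim: typed.cases intro: typed.intros)

lemma typed_Out_iff: "\<rho> \<turnstile>\<^sub>t Out a b P \<longleftrightarrow> (\<exists>\<sigma>. \<rho> = \<sigma> \<union> {a} \<and> \<sigma> \<turnstile>\<^sub>t P)"
  by (blast elim: typed.cases intro: typed.intros)

lemma typed_Inp_iff: "\<rho> \<turnstile>\<^sub>t Inp a x P \<longleftrightarrow> (\<exists>\<sigma>. \<rho> = \<sigma> \<union> {a} \<and> \<sigma> \<turnstile>\<^sub>t P \<and> x \<notin> \<sigma>)"
  by (blast elim: typed.cases intro: typed.intros)

lemma typed_AOut_iff: "\<rho> \<turnstile>\<^sub>t AOut a b P \<longleftrightarrow> (\<exists>\<sigma>. \<rho> = \<sigma> \<union> {a, b} \<and> \<sigma> \<turnstile>\<^sub>t P \<and> b \<notin> \<sigma>)"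
  by (blast elim: typed.cases intro: typed.intros)

lemma typed_AInp_iff: "\<rho> \<turnstile>\<^sub>t AInp a b P \<longleftrightarrow> (\<exists>\<sigma>. \<rho> = (\<sigma> - {b}) \<union> {a} \<and> \<sigma> \<turnstile>\<^sub>t P)"
  by (blast elim: typed.cases intro: typed.intros)

lemmas typed_iffs = typed_Nil_iff typed_Par_iff typed_Res_iff typed_Auth_iff
  typed_Out_iff typed_Inp_iff typed_AOut_iff typed_AInp_iff

lemma swp_swp [simp]: "swp a b (swp a b c) = c"
  by (simp add: swp_def)

lemma swp_commute: "swp a b = swp b a"
  by (auto simp: swp_def)

lemma inj_swp: "inj (swp a b)"
  by (metis injI swp_swp)

lemma swp_image_fresh: "a \<notin> A \<Longrightarrow> b \<notin> A \<Longrightarrow> swp a b ` A = A"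
  by (auto simp: swp_def image_iff)

lemma swap_swap [simp]: "swap a b (swap a b P) = P"
  by (induction P) auto

lemma swap_commute: "swap a b P = swap b a P"
  by (induction P) (simp_all add: swp_commute)

lemma fn_swap: "fn (swap a b P) = swp a b ` fn P"
  by (induction P) (auto simp: image_Un image_set_diff[OF inj_swp])

lemma typed_swap: "\<rho> \<turnstile>\<^sub>t P \<Longrightarrow> swp a b ` \<rho> \<turnstile>\<^sub>t swap a b P"
proof (induction rule: typed.induct)
  case (t_par \<rho>1 P \<rho>2 Q)
  then show ?case
    using typed.t_par by (simp add: image_Un)
next
  case (t_res \<rho> P c)
  then show ?case
    using typed.t_res by (simp add: inj_image_mem_iff[OF inj_swp])
next
  case (t_auth \<rho> P c)
  then show ?case
    using typed.t_auth[of "swp a b ` \<rho>" "swap a b P" "swp a b c"]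
    by (simp add: image_set_diff[OF inj_swp])
next
  case (t_out \<rho> P c d)
  then show ?case
    using typed.t_out[of "swp a b ` \<rho>" "swap a b P" "swp a b c"] by simp
next
  case (t_inp \<rho> P x c)
  then show ?case
    using typed.t_inp[of "swp a b ` \<rho>" "swap a b P" "swp a b x" "swp a b c"]
    by (simp add: inj_image_mem_iff[OF inj_swp])
next
  case (t_aout \<rho> P d c)
  then show ?case
    using typed.t_aout[of "swp a b ` \<rho>" "swap a b P" "swp a b d" "swp a b c"]
    by (simp add: inj_image_mem_iff[OF inj_swp] insert_commute)
next
  case (t_ainp \<rho> P c d)
  then show ?case
    using typed.t_ainp[of "swp a b ` \<rho>" "swap a b P" "swp a b c" "swp a b d"]
    by (simp add: image_set_diff[OF inj_swp])
qed (simp add: typed.t_nil)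

lemma typed_swap_fresh:
  assumes typed: "\<rho> \<turnstile>\<^sub>t P" and "a \<notin> \<rho>" "b \<notin> fn P"
  shows "\<rho> \<turnstile>\<^sub>t swap a b P"
proof -
  have "b \<notin> \<rho>"
    using typed_fn[OF typed] \<open>b \<notin> fn P\<close> by blast
  then show ?thesis
    using typed_swap[OF typed, of a b] swp_image_fresh[OF \<open>a \<notin> \<rho>\<close>] by simp
qed

lemma typed_rename_bound:
  assumes "b \<notin> fn P"
  shows "\<sigma> \<turnstile>\<^sub>t P \<and> a \<notin> \<sigma> \<longleftrightarrow> \<sigma> \<turnstile>\<^sub>t swap a b P \<and> b \<notin> \<sigma>"
proof
  assume typed: "\<sigma> \<turnstile>\<^sub>t P \<and> a \<notin> \<sigma>"
  then have "b \<notin> \<sigma>"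
    using typed_fn assms by blast
  with typed show "\<sigma> \<turnstile>\<^sub>t swap a b P \<and> b \<notin> \<sigma>"
    using typed_swap_fresh[OF _ _ assms] by simp
next
  assume typed: "\<sigma> \<turnstile>\<^sub>t swap a b P \<and> b \<notin> \<sigma>"
  have a_fresh: "a \<notin> fn (swap a b P)"
    using assms by (auto simp: fn_swap swp_def)
  then have "a \<notin> \<sigma>"
    using typed typed_fn by blast
  moreover have "\<sigma> \<turnstile>\<^sub>t swap b a (swap a b P)"
    using typed_swap_fresh[OF _ _ a_fresh] typed by simp
  ultimately show "\<sigma> \<turnstile>\<^sub>t P \<and> a \<notin> \<sigma>"
    by (simp add: swap_commute[of b a])
qed

lemma alpha_typed_iff: "alpha P Q \<Longrightarrow> \<rho> \<turnstile>\<^sub>t P \<longleftrightarrow> \<rho> \<turnstile>\<^sub>t Q"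
proof (induction arbitrary: \<rho> rule: alpha.induct)
  case (alpha_res b P a)
  then show ?case
    by (simp only: typed_Res_iff typed_rename_bound[OF alpha_res])
next
  case (alpha_inp y P a x)
  then show ?case
    by (simp only: typed_Inp_iff typed_rename_bound[OF alpha_inp])
qed (simp_all add: typed_iffs)

lemma scong_typed_iff: "P \<equiv>\<^sub>s Q \<Longrightarrow> \<rho> \<turnstile>\<^sub>t P \<longleftrightarrow> \<rho> \<turnstile>\<^sub>t Q"
proof (induction arbitrary: \<rho> rule: scong.induct)
  case (sc_par_comm P Q)
  then show ?case
    by (simp add: typed_Par_iff) blast
next
  case (sc_par_assoc P Q R)
  then show ?case
    by (simp add: typed_Par_iff) (metis Un_assoc)
next
  case (sc_res_nil a)
  then show ?case
    by (auto simp: typed_Res_iff typed_Nil_iff)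
next
  case (sc_res_res a b P)
  then show ?case
    by (simp add: typed_Res_iff) blast
next
  case (sc_scope a P Q)
  then have "a \<notin> \<rho>1" if "\<rho>1 \<turnstile>\<^sub>t P" for \<rho>1
    using typed_fn[OF that] by blast
  then show ?case
    by (auto simp: typed_Par_iff typed_Res_iff)
next
  case (sc_alpha P Q)
  then show ?case
    by (rule alpha_typed_iff)
next
  case (sc_auth_auth a b P)
  have "\<rho> \<turnstile>\<^sub>t Auth a (Auth b P) \<longleftrightarrow> (\<exists>\<sigma>. \<rho> = \<sigma> - {a, b} \<and> \<sigma> \<turnstile>\<^sub>t P)" for a b
    by (auto simp: typed_Auth_iff)
  then show ?case
    by (simp add: insert_commute)
next
  case (sc_auth_par a P Q)
  then show ?case
    by (simp add: typed_Auth_iff typed_Par_iff) (metis Un_Diff)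
next
  case (sc_auth_res a b P)
  then show ?case
    by (auto simp: typed_Auth_iff typed_Res_iff)
qed (simp_all add: typed_iffs)

theorem mainTheorem4:
  fixes \<rho> :: "name set" and P Q :: proc
  assumes "\<rho> \<turnstile>\<^sub>t P" and "P \<equiv>\<^sub>s Q"
  shows "\<rho> \<turnstile>\<^sub>t Q"
  using scong_typed_iff[OF assms(2)] assms(1) by simp

end
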